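(* Let $n\ge 3$ and let $(a_{\mathbf{i}})_{\mathbf{i}\in\mathbb{Z}^n}$ be either an $\mathrm{SL}_2$-tiling or an anti-$\mathrm{SL}_2$-tiling of $\mathbb{Z}^n$. Then for every $r\in\mathbb{Z}$, the value $a_{\mathbf{i}}$ is the same for all $\mathbf{i}=(i_1,\dots,i_n)\in\mathbb{Z}^n$ with $i_1+\dots+i_n=r$.
   Context: Write $\mathbf{i}=(i_1,\dots,i_n)\in\mathbb{Z}^n$ and $\mathbf{e}_k$ for the $k$-th standard unit vector. An $\mathrm{SL}_2$-tiling (resp. anti-$\mathrm{SL}_2$-tiling) of $\mathbb{Z}^n$ is an array $(a_{\mathbf{i}})_{\mathbf{i}\in\mathbb{Z}^n}$ with all $a_{\mathbf{i}}\in\mathbb{Z}_{>0}$ such that for all $\mathbf{i}\in\mathbb{Z}^n$ and all $k\ne\ell$: $a_{\mathbf{i}+\mathbf{e}_\ell}a_{\mathbf{i}+\mathbf{e}_k}-a_{\mathbf{i}}a_{\mathbf{i}+\mathbf{e}_k+\mathbf{e}_\ell}=1$ (resp. $=-1$). *)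

theory Defs
  imports Main
begin

text \<open>Points of Z^n are represented as functions nat => int that vanish outside {0..<n}
  (coordinate k of the paper corresponds to index k-1).\<close>

definition lattice :: "nat \<Rightarrow> (nat \<Rightarrow> int) set" where
  "lattice n = {i. \<forall>k\<ge>n. i k = 0}"

definition shift :: "(nat \<Rightarrow> int) \<Rightarrow> nat \<Rightarrow> (nat \<Rightarrow> int)" where
  "shift i k = (\<lambda>j. if j = k then i j + 1 else i j)"

definition sl2_tiling_sgn :: "int \<Rightarrow> nat \<Rightarrow> ((nat \<Rightarrow> int) \<Rightarrow> int) \<Rightarrow> bool" where
  "sl2_tiling_sgn eps n a \<longleftrightarrow>
     (\<forall>i\<in>lattice n. a i > 0) \<and>
     (\<forall>i\<in>lattice n. \<forall>k<n. \<forall>l<n. k \<noteq> l \<longrightarrow>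
        a (shift i l) * a (shift i k) - a i * a (shift (shift i k) l) = eps)"

definition SL2_tiling :: "nat \<Rightarrow> ((nat \<Rightarrow> int) \<Rightarrow> int) \<Rightarrow> bool" where
  "SL2_tiling n a \<longleftrightarrow> sl2_tiling_sgn 1 n a"

definition anti_SL2_tiling :: "nat \<Rightarrow> ((nat \<Rightarrow> int) \<Rightarrow> int) \<Rightarrow> bool" where
  "anti_SL2_tiling n a \<longleftrightarrow> sl2_tiling_sgn (-1) n a"

end

theory Submission
  imports Defs
begin

text \<open>Fix a point p and three distinct directions k, l, m (this is where n \<ge> 3 enters).
  The five tiling relations on the faces of the unit cube at p that contain p + e_k or
  p + e_l combine to
  \<epsilon> (a(p+e_k) - a(p+e_l)) (a(p+e_k) a(p+e_l) - \<epsilon> + a(p)^2) = 0,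
  and the second factor is positive because all entries are positive integers and
  \<epsilon> = \<plusminus>1. Hence a(p+e_k) = a(p+e_l): moving one unit from one coordinate to another
  does not change the value of a, and such moves connect any two lattice points with
  the same coordinate sum.\<close>

lemma sl2_cube_identity:
  fixes x xk xl xm xkl xkm xlm A eps :: "'a::comm_ring_1"
  assumes "xl * xk - x * xkl = eps" "xm * xk - x * xkm = eps" "xm * xl - x * xlm = eps"
    and "xkm * xkl - xk * A = eps" "xlm * xkl - xl * A = eps"
  shows "eps * ((xk - xl) * (xk * xl - eps + x\<^sup>2)) = 0"
proof -
  have kl: "x * xkl = xl * xk - eps" and km: "x * xkm = xm * xk - eps"
    and lm: "x * xlm = xm * xl - eps"
    using assms(1-3) by (simp_all add: algebra_simps)
  have "(x * xkl) * ((x * xkm) * xl - (x * xlm) * xk)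
      = x\<^sup>2 * xl * (xkm * xkl - xk * A) - x\<^sup>2 * xk * (xlm * xkl - xl * A)"
    by (simp add: algebra_simps power2_eq_square)
  also have "\<dots> = x\<^sup>2 * xl * eps - x\<^sup>2 * xk * eps"
    using assms(4,5) by simp
  finally have "(xl * xk - eps) * ((xm * xk - eps) * xl - (xm * xl - eps) * xk)
      = x\<^sup>2 * xl * eps - x\<^sup>2 * xk * eps"
    by (simp only: kl km lm)
  then show ?thesis
    by (simp add: algebra_simps power2_eq_square)
qed

lemma shift_commute: "shift (shift i k) l = shift (shift i l) k"
  unfolding shift_def by (auto simp: fun_eq_iff)

lemma shift_in_lattice: "i \<in> lattice n \<Longrightarrow> k < n \<Longrightarrow> shift i k \<in> lattice n"
  unfolding shift_def lattice_def by auto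

lemma fun_upd_in_lattice: "i \<in> lattice n \<Longrightarrow> k < n \<Longrightarrow> i(k := v) \<in> lattice n"
  unfolding lattice_def by auto

lemma sl2_tiling_sgn_pos: "sl2_tiling_sgn eps n a \<Longrightarrow> i \<in> lattice n \<Longrightarrow> a i > 0"
  unfolding sl2_tiling_sgn_def by blast

lemma sl2_tiling_sgn_rel:
  "sl2_tiling_sgn eps n a \<Longrightarrow> i \<in> lattice n \<Longrightarrow> k < n \<Longrightarrow> l < n \<Longrightarrow> k \<noteq> l \<Longrightarrow>
     a (shift i l) * a (shift i k) - a i * a (shift (shift i k) l) = eps"
  unfolding sl2_tiling_sgn_def by blast

lemma sl2_tiling_sgn_shift_eq:
  assumes "n \<ge> 3" and T: "sl2_tiling_sgn eps n a" and eps: "eps = 1 \<or> eps = -1"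
    and p: "p \<in> lattice n" and k: "k < n" and l: "l < n"
  shows "a (shift p k) = a (shift p l)"
proof (cases "k = l")
  case False
  obtain m where m: "m < n" "m \<noteq> k" "m \<noteq> l"
  proof -
    have "\<exists>m\<in>{0, 1, 2::nat}. m \<noteq> k \<and> m \<noteq> l" by auto
    then obtain m where "m \<in> {0, 1, 2}" "m \<noteq> k" "m \<noteq> l" by blast
    with \<open>n \<ge> 3\<close> show ?thesis by (intro that[of m]) auto
  qed
  note R = sl2_tiling_sgn_rel[OF T]
  have pk: "shift p k \<in> lattice n" and pl: "shift p l \<in> lattice n"
    using shift_in_lattice p k l by blast+
  have "eps * ((a (shift p k) - a (shift p l)) * (a (shift p k) * a (shift p l) - eps + (a p)\<^sup>2)) = 0"
  proof (rule sl2_cube_identity)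
    show "a (shift p l) * a (shift p k) - a p * a (shift (shift p k) l) = eps"
      using R[OF p k l False] .
    show "a (shift p m) * a (shift p k) - a p * a (shift (shift p k) m) = eps"
      using R[OF p k m(1)] m by auto
    show "a (shift p m) * a (shift p l) - a p * a (shift (shift p l) m) = eps"
      using R[OF p l m(1)] m by auto
    show "a (shift (shift p k) m) * a (shift (shift p k) l)
        - a (shift p k) * a (shift (shift (shift p k) l) m) = eps"
      using R[OF pk l m(1)] m by auto
    show "a (shift (shift p l) m) * a (shift (shift p k) l)
        - a (shift p l) * a (shift (shift (shift p k) l) m) = eps"
      using R[OF pl k m(1)] m by (auto simp: shift_commute[of p l k])
  qed
  moreover have "a (shift p k) * a (shift p l) - eps + (a p)\<^sup>2 > 0"
  proof -
    have "a (shift p k) \<ge> 1" "a (shift p l) \<ge> 1" "a p \<ge> 1"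
      using sl2_tiling_sgn_pos[OF T] p pk pl by (auto simp: int_one_le_iff_zero_less)
    then have "a (shift p k) * a (shift p l) \<ge> 1" "(a p)\<^sup>2 \<ge> 1"
      using mult_mono[of 1 "a (shift p k)" 1 "a (shift p l)"] mult_mono[of 1 "a p" 1 "a p"]
      by (auto simp: power2_eq_square)
    with eps show ?thesis by auto
  qed
  ultimately show ?thesis using eps by auto
qed simp

lemma shift_eq_imp_transfer_eq:
  fixes f :: "(nat \<Rightarrow> int) \<Rightarrow> 'b"
  assumes shift_eq: "\<And>p k l. p \<in> lattice n \<Longrightarrow> k < n \<Longrightarrow> l < n \<Longrightarrow> f (shift p k) = f (shift p l)"
    and q: "q \<in> lattice n" and k: "k < n" and l: "l < n" and "k \<noteq> l"
  shows "f (q(k := q k - t, l := q l + t)) = f q"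
proof -
  have unit: "f (q(k := q k - 1, l := q l + 1)) = f q"
    if "q \<in> lattice n" "k < n" "l < n" "k \<noteq> l" for q k l
  proof -
    let ?p = "q(k := q k - 1)"
    have "shift ?p k = q" "shift ?p l = q(k := q k - 1, l := q l + 1)"
      using that by (auto simp: shift_def fun_eq_iff)
    then show ?thesis
      using shift_eq[of ?p k l] fun_upd_in_lattice that by metis
  qed
  show ?thesis
  proof (induction t rule: int_induct[where k = 0])
    case (step1 t)
    let ?q = "q(k := q k - t, l := q l + t)"
    have "?q \<in> lattice n" using q k l by (intro fun_upd_in_lattice) auto
    have "q(k := q k - (t + 1), l := q l + (t + 1)) = ?q(k := ?q k - 1, l := ?q l + 1)"
      using \<open>k \<noteq> l\<close> by (auto simp: fun_eq_iff)
    then have "f (q(k := q k - (t + 1), l := q l + (t + 1))) = f ?q"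
      using unit[OF \<open>?q \<in> lattice n\<close> k l \<open>k \<noteq> l\<close>] by (simp only:)
    then show ?case using step1.IH by (rule trans)
  next
    case (step2 t)
    let ?q = "q(k := q k - t, l := q l + t)"
    have "?q \<in> lattice n" using q k l by (intro fun_upd_in_lattice) auto
    have "q(k := q k - (t - 1), l := q l + (t - 1)) = ?q(l := ?q l - 1, k := ?q k + 1)"
      using \<open>k \<noteq> l\<close> by (auto simp: fun_eq_iff)
    then have "f (q(k := q k - (t - 1), l := q l + (t - 1))) = f ?q"
      using unit[OF \<open>?q \<in> lattice n\<close> l k \<open>k \<noteq> l\<close>[symmetric]] by (simp only:)
    then show ?case using step2.IH by (rule trans)
  qed simp
qed

lemma sum_fun_upd_lessThan:
  fixes f :: "nat \<Rightarrow> 'a::ab_group_add"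
  assumes "k < n"
  shows "(\<Sum>j<n. (f(k := v)) j) = (\<Sum>j<n. f j) - f k + v"
proof -
  have "(\<Sum>j\<in>{..<n} - {k}. (f(k := v)) j) = (\<Sum>j\<in>{..<n} - {k}. f j)"
    by (rule sum.cong) auto
  with assms show ?thesis
    by (simp add: sum.remove[of "{..<n}" k])
qed

text \<open>The highest coordinate of the support is moved into coordinate 0 at each step.\<close>

lemma shift_eq_imp_eq_collected:
  fixes f :: "(nat \<Rightarrow> int) \<Rightarrow> 'b"
  assumes shift_eq: "\<And>p k l. p \<in> lattice n \<Longrightarrow> k < n \<Longrightarrow> l < n \<Longrightarrow> f (shift p k) = f (shift p l)"
  shows "Suc m \<le> n \<Longrightarrow> i \<in> lattice (Suc m) \<Longrightarrow> f i = f ((\<lambda>_. 0)(0 := \<Sum>k<n. i k))"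
proof (induction m arbitrary: i)
  case 0
  then have "(\<Sum>k<n. i k) = i 0"
    by (intro sum.mono_neutral_left[of "{..<n}" "{0}", simplified, symmetric])
      (auto simp: lattice_def)
  moreover have "i = (\<lambda>_. 0)(0 := i 0)"
    using "0.prems"(2) by (auto simp: lattice_def fun_eq_iff)
  ultimately show ?case by simp
next
  case (Suc m)
  let ?i = "i(Suc m := 0, 0 := i 0 + i (Suc m))"
  have "i \<in> lattice n"
    using Suc.prems by (auto simp: lattice_def)
  have i_lattice: "?i \<in> lattice (Suc m)"
    using Suc.prems(2) by (auto simp: lattice_def le_Suc_eq)
  have sum_eq: "(\<Sum>k<n. ?i k) = (\<Sum>k<n. i k)"
    using Suc.prems(1) sum_fun_upd_lessThan[of "Suc m" n i 0]
      sum_fun_upd_lessThan[of 0 n "i(Suc m := 0)" "i 0 + i (Suc m)"]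
    by simp
  have "f i = f ?i"
    using shift_eq_imp_transfer_eq[where f = f and n = n and q = i and k = "Suc m" and l = 0
        and t = "i (Suc m)", OF shift_eq \<open>i \<in> lattice n\<close>] Suc.prems(1)
    by simp
  also have "\<dots> = f ((\<lambda>_. 0)(0 := \<Sum>k<n. ?i k))"
    using Suc.IH[OF Suc_leD[OF Suc.prems(1)] i_lattice] .
  also have "\<dots> = f ((\<lambda>_. 0)(0 := \<Sum>k<n. i k))"
    unfolding sum_eq ..
  finally show ?case .
qed

lemma shift_eq_imp_eq_if_sum_eq:
  fixes f :: "(nat \<Rightarrow> int) \<Rightarrow> 'b"
  assumes shift_eq: "\<And>p k l. p \<in> lattice n \<Longrightarrow> k < n \<Longrightarrow> l < n \<Longrightarrow> f (shift p k) = f (shift p l)"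
    and "n \<ge> 1" and "i \<in> lattice n" and "j \<in> lattice n"
    and sum_eq: "(\<Sum>k<n. i k) = (\<Sum>k<n. j k)"
  shows "f i = f j"
proof -
  note collect = shift_eq_imp_eq_collected[where f = f and n = n and m = "n - 1", OF shift_eq]
  have "f i = f ((\<lambda>_. 0)(0 := \<Sum>k<n. i k))"
    using collect[of i] assms(2,3) by simp
  also have "\<dots> = f j"
    using collect[of j] assms(2,4) sum_eq by simp
  finally show ?thesis .
qed

theorem lemma2p2:
  fixes n :: nat and a :: "(nat \<Rightarrow> int) \<Rightarrow> int"
  assumes "n \<ge> 3"
    and "SL2_tiling n a \<or> anti_SL2_tiling n a"
  shows "\<forall>r::int. \<forall>i\<in>lattice n. \<forall>j\<in>lattice n.
           (\<Sum>k<n. i k) = r \<longrightarrow> (\<Sum>k<n. j k) = r \<longrightarrow> a i = a j"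
proof -
  obtain eps where T: "sl2_tiling_sgn eps n a" and eps: "eps = 1 \<or> eps = -1"
    using assms(2) unfolding SL2_tiling_def anti_SL2_tiling_def by blast
  have "n \<ge> 1" using assms(1) by simp
  show ?thesis
  proof (intro allI ballI impI)
    fix r i j assume ij: "i \<in> lattice n" "j \<in> lattice n"
      and "(\<Sum>k<n. i k) = r" "(\<Sum>k<n. j k) = r"
    then have sum_eq: "(\<Sum>k<n. i k) = (\<Sum>k<n. j k)" by simp
    show "a i = a j"
      by (rule shift_eq_imp_eq_if_sum_eq[OF _ \<open>n \<ge> 1\<close> ij sum_eq])
        (use sl2_tiling_sgn_shift_eq[OF assms(1) T eps] in blast)
  qed
qed

end
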